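(* For every $n\in\{1,\dots,N\}$, the limits $-\lim_{\rho\to\infty}\frac{\log P^{(b)}_n(\rho)}{\log\rho}$ and $-\lim_{\rho\to\infty}\frac{\log P^{c}_n(\rho)}{\log\rho}$ exist and both equal $n(m_h+m_sK)$.
   Context: Fix integers $N\ge1$, $K\ge1$, $b\ge2$ and a real $\beta\in(0,1]$. Let $m_G,m_g,m_h\ge 1/2$ with $m_G\neq m_g$; put $m_s=\min\{m_G,m_g\}$. For $n=1,\dots,N$ and $k=1,\dots,K$ let $h_n,G_k^n,g_k^n$ be mutually independent complex random variables with $|G_k^n|$, $|g_k^n|$, $|h_n|$ having the Nakagami density $f(x)=\frac{2m^m}{\Gamma(m)}x^{2m-1}e^{-mx^2}$ ($x\ge0$) with $m=m_G$, $m_g$, $m_h$ respectively. Let $\Delta=2\pi/2^b$; set $\bar\theta_k^n=\arg(h_n)-\arg(G_k^ng_k^n)$, $\hat\theta_k^n=\Delta(\lfloor\bar\theta_k^n/\Delta\rfloor+\tfrac12)$, $\epsilon_k^n=\hat\theta_k^n-\bar\theta_k^n$. Define $Z^{(n)}=\big||h_n|+\beta\sum_{k=1}^K|G_k^n||g_k^n|e^{j\epsilon_k^n}\big|$ and $Z_c^{(n)}=|h_n|+\beta\sum_{k=1}^K|G_k^n||g_k^n|$; let $Z_1\le\dots\le Z_N$ and $Z_{c,1}\le\dots\le Z_{c,N}$ be their order statistics. NOMA parameters: $\alpha_1>\dots>\alpha_N>0$ with $\sum_n\alpha_n=1$; $\tilde\gamma_l=2^{\tilde R_l}-1$ for target rates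 $\tilde R_l>0$, with $\alpha_l-\tilde\gamma_l\sum_{i=l+1}^N\alpha_i>0$ for $1\le l\le N-1$; transmit SNR $\rho>0$. For $l\le n$ set $\tilde\rho_{n\leftarrow l}=\frac{\tilde\gamma_l}{\rho(\alpha_l-\tilde\gamma_l\sum_{i=l+1}^N\alpha_i)}$ if $(l,n)\neq(N,N)$ and $\tilde\rho_{N\leftarrow N}=\frac{\tilde\gamma_N}{\rho\alpha_N}$; $\tilde\rho_{n,\max}=\max_{1\le l\le n}\tilde\rho_{n\leftarrow l}$. Outage probabilities: $P^{(b)}_n(\rho)=\Pr(Z_n^2<\tilde\rho_{n,\max})$, $P^{c}_n(\rho)=\Pr(Z_{c,n}^2<\tilde\rho_{n,\max})$. *)

theory Defs
  imports "HOL-Probability.Probability"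
begin

definition nakagami_density :: "real \<Rightarrow> real \<Rightarrow> real" where
  "nakagami_density m x =
     (if 0 \<le> x then 2 * m powr m / Gamma m * x powr (2 * m - 1) * exp (- m * x\<^sup>2) else 0)"

definition qstep :: "nat \<Rightarrow> real" where
  "qstep b = 2 * pi / 2 ^ b"

definition qerr :: "nat \<Rightarrow> real \<Rightarrow> real" where
  "qerr b \<theta> = qstep b * (real_of_int \<lfloor>\<theta> / qstep b\<rfloor> + 1/2) - \<theta>"

text \<open>Effective channel gain of one user (h : direct link, G k, g k : the K cascaded links).\<close>
definition Zq :: "nat \<Rightarrow> real \<Rightarrow> nat \<Rightarrow> complex \<Rightarrow> (nat \<Rightarrow> complex) \<Rightarrow> (nat \<Rightarrow> complex) \<Rightarrow> real" where
  "Zq b \<beta> K h G g =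
     cmod (complex_of_real (cmod h) + complex_of_real \<beta> *
       (\<Sum>k=1..K. complex_of_real (cmod (G k) * cmod (g k)) *
                   cis (qerr b (Arg h - Arg (G k * g k)))))"

definition Zcont :: "real \<Rightarrow> nat \<Rightarrow> complex \<Rightarrow> (nat \<Rightarrow> complex) \<Rightarrow> (nat \<Rightarrow> complex) \<Rightarrow> real" where
  "Zcont \<beta> K h G g = cmod h + \<beta> * (\<Sum>k=1..K. cmod (G k) * cmod (g k))"

text \<open>n-th order statistic (n = 1 is the smallest) of f 1, ..., f N.\<close>
definition order_stat :: "nat \<Rightarrow> (nat \<Rightarrow> real) \<Rightarrow> nat \<Rightarrow> real" where
  "order_stat N f n = sort (map f [1..<Suc N]) ! (n - 1)"

definition gam :: "(nat \<Rightarrow> real) \<Rightarrow> nat \<Rightarrow> real" where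
  "gam R l = 2 powr R l - 1"

definition rho_tilde :: "(nat \<Rightarrow> real) \<Rightarrow> (nat \<Rightarrow> real) \<Rightarrow> nat \<Rightarrow> real \<Rightarrow> nat \<Rightarrow> nat \<Rightarrow> real" where
  "rho_tilde \<alpha> R N \<rho> n l =
     (if (l, n) \<noteq> (N, N)
      then gam R l / (\<rho> * (\<alpha> l - gam R l * (\<Sum>i=l+1..N. \<alpha> i)))
      else gam R N / (\<rho> * \<alpha> N))"

definition rho_max :: "(nat \<Rightarrow> real) \<Rightarrow> (nat \<Rightarrow> real) \<Rightarrow> nat \<Rightarrow> real \<Rightarrow> nat \<Rightarrow> real" where
  "rho_max \<alpha> R N \<rho> n = Max ((rho_tilde \<alpha> R N \<rho> n) ` {1..n})"

datatype cidx = CH nat | CG nat nat | Cg nat nat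

definition chan :: "(nat \<Rightarrow> 'a \<Rightarrow> complex) \<Rightarrow> (nat \<Rightarrow> nat \<Rightarrow> 'a \<Rightarrow> complex) \<Rightarrow> (nat \<Rightarrow> nat \<Rightarrow> 'a \<Rightarrow> complex)
                    \<Rightarrow> cidx \<Rightarrow> 'a \<Rightarrow> complex" where
  "chan h G g i = (case i of CH n \<Rightarrow> h n | CG n k \<Rightarrow> G n k | Cg n k \<Rightarrow> g n k)"

definition chan_idx :: "nat \<Rightarrow> nat \<Rightarrow> cidx set" where
  "chan_idx N K = CH ` {1..N} \<union> (\<lambda>(n, k). CG n k) ` ({1..N} \<times> {1..K})
                  \<union> (\<lambda>(n, k). Cg n k) ` ({1..N} \<times> {1..K})"

text \<open>Outage probabilities of user n with b-bit phase quantization and with continuous phases.\<close>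
definition outage_b :: "'a measure \<Rightarrow> nat \<Rightarrow> real \<Rightarrow> nat \<Rightarrow> nat \<Rightarrow>
    (nat \<Rightarrow> 'a \<Rightarrow> complex) \<Rightarrow> (nat \<Rightarrow> nat \<Rightarrow> 'a \<Rightarrow> complex) \<Rightarrow> (nat \<Rightarrow> nat \<Rightarrow> 'a \<Rightarrow> complex) \<Rightarrow>
    (nat \<Rightarrow> real) \<Rightarrow> (nat \<Rightarrow> real) \<Rightarrow> nat \<Rightarrow> real \<Rightarrow> real" where
  "outage_b M b \<beta> K N h G g \<alpha> R n \<rho> =
     measure M {\<omega> \<in> space M.
       (order_stat N (\<lambda>i. Zq b \<beta> K (h i \<omega>) (\<lambda>k. G i k \<omega>) (\<lambda>k. g i k \<omega>)) n)\<^sup>2 < rho_max \<alpha> R N \<rho> n}"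

definition outage_c :: "'a measure \<Rightarrow> real \<Rightarrow> nat \<Rightarrow> nat \<Rightarrow>
    (nat \<Rightarrow> 'a \<Rightarrow> complex) \<Rightarrow> (nat \<Rightarrow> nat \<Rightarrow> 'a \<Rightarrow> complex) \<Rightarrow> (nat \<Rightarrow> nat \<Rightarrow> 'a \<Rightarrow> complex) \<Rightarrow>
    (nat \<Rightarrow> real) \<Rightarrow> (nat \<Rightarrow> real) \<Rightarrow> nat \<Rightarrow> real \<Rightarrow> real" where
  "outage_c M \<beta> K N h G g \<alpha> R n \<rho> =
     measure M {\<omega> \<in> space M.
       (order_stat N (\<lambda>i. Zcont \<beta> K (h i \<omega>) (\<lambda>k. G i k \<omega>) (\<lambda>k. g i k \<omega>)) n)\<^sup>2 < rho_max \<alpha> R N \<rho> n}"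

end

theory Submission
  imports Defs "HOL-Complex_Analysis.Cauchy_Integral_Theorem"
begin

(* Each user's gain is comparable, up to constant factors, with the largest of its K + 1 link
   gains |h_n| and |G_k^n| |g_k^n|: with b >= 2 bits every quantised phase error has cosine at
   least 1/2, so no cascaded term can cancel the others.  Near 0 the distribution function of a
   Nakagami-m modulus behaves like x^(2m), and that of a product of two independent ones like
   x^(2 min(m_G, m_g)) because m_G <> m_g.  By independence, the probability that the n-th
   smallest gain lies below s is then squeezed between two constant multiples of
   s^(2n(m_h + m_s K)), and the outage threshold is proportional to 1/rho. *)

section \<open>Lower-tail exponents\<close>

definition lower_tail_exponent :: "'a measure \<Rightarrow> ('a \<Rightarrow> real) \<Rightarrow> real \<Rightarrow> bool" where
  "lower_tail_exponent M X p \<longleftrightarrow>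
     (\<exists>C>0. \<forall>x>0. measure M {\<omega>\<in>space M. X \<omega> < x} \<le> C * x powr p) \<and>
     (\<exists>c>0. \<forall>x. 0 < x \<and> x \<le> 1 \<longrightarrow> c * x powr p \<le> measure M {\<omega>\<in>space M. X \<omega> < x})"

lemma ln_ratio_tendsto_of_powr_bounds:
  fixes P :: "real \<Rightarrow> real"
  assumes A: "A > 0" and B: "B > 0"
    and bounds: "\<forall>\<^sub>F \<rho> in at_top. A * \<rho> powr (-D) \<le> P \<rho> \<and> P \<rho> \<le> B * \<rho> powr (-D)"
  shows "((\<lambda>\<rho>. - ln (P \<rho>) / ln \<rho>) \<longlongrightarrow> D) at_top"
proof (rule tendsto_sandwich)
  have vanish: "((\<lambda>\<rho>. D - c / ln \<rho>) \<longlongrightarrow> D) at_top" for c :: real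
    using tendsto_diff[OF tendsto_const tendsto_divide_0[OF tendsto_const
        filterlim_at_top_imp_at_infinity[OF ln_at_top]]] by simp
  show "((\<lambda>\<rho>. D - ln B / ln \<rho>) \<longlongrightarrow> D) at_top" "((\<lambda>\<rho>. D - ln A / ln \<rho>) \<longlongrightarrow> D) at_top"
    by (rule vanish)+
  have ln_bounds: "\<forall>\<^sub>F \<rho> in at_top.
      ln A - D * ln \<rho> \<le> ln (P \<rho>) \<and> ln (P \<rho>) \<le> ln B - D * ln \<rho> \<and> 0 < ln \<rho>"
    using bounds eventually_gt_at_top[of 1]
  proof eventually_elim
    case (elim \<rho>)
    have "0 < A * \<rho> powr (-D)" using A elim by simp
    then have "ln (A * \<rho> powr (-D)) \<le> ln (P \<rho>) \<and> ln (P \<rho>) \<le> ln (B * \<rho> powr (-D))"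
      using elim by (auto intro!: ln_mono)
    then show ?case using A B elim by (simp add: ln_mult ln_powr)
  qed
  show "\<forall>\<^sub>F \<rho> in at_top. D - ln B / ln \<rho> \<le> - ln (P \<rho>) / ln \<rho>"
    using ln_bounds
  proof eventually_elim
    case (elim \<rho>)
    then have "(D * ln \<rho> - ln B) / ln \<rho> \<le> - ln (P \<rho>) / ln \<rho>"
      by (intro divide_right_mono) auto
    with elim show ?case by (simp add: diff_divide_distrib)
  qed
  show "\<forall>\<^sub>F \<rho> in at_top. - ln (P \<rho>) / ln \<rho> \<le> D - ln A / ln \<rho>"
    using ln_bounds
  proof eventually_elim
    case (elim \<rho>)
    then have "- ln (P \<rho>) / ln \<rho> \<le> (D * ln \<rho> - ln A) / ln \<rho>"
      by (intro divide_right_mono) auto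
    with elim show ?case by (simp add: diff_divide_distrib)
  qed
qed

lemma lower_tail_exponent_ln_limit:
  assumes tail: "lower_tail_exponent M X E"
    and nonneg: "\<And>\<omega>. \<omega> \<in> space M \<Longrightarrow> 0 \<le> X \<omega>" and T: "0 < T"
  shows "((\<lambda>\<rho>. - ln (measure M {\<omega>\<in>space M. (X \<omega>)\<^sup>2 < T / \<rho>}) / ln \<rho>) \<longlongrightarrow> E / 2) at_top"
proof -
  obtain C c where C: "0 < C" "\<And>x. 0 < x \<Longrightarrow> measure M {\<omega>\<in>space M. X \<omega> < x} \<le> C * x powr E"
    and c: "0 < c" "\<And>x. 0 < x \<Longrightarrow> x \<le> 1 \<Longrightarrow> c * x powr E \<le> measure M {\<omega>\<in>space M. X \<omega> < x}"
    using tail unfolding lower_tail_exponent_def by blast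
  have "\<forall>\<^sub>F \<rho> in at_top.
      c * T powr (E/2) * \<rho> powr (-(E/2)) \<le> measure M {\<omega>\<in>space M. (X \<omega>)\<^sup>2 < T / \<rho>} \<and>
      measure M {\<omega>\<in>space M. (X \<omega>)\<^sup>2 < T / \<rho>} \<le> C * T powr (E/2) * \<rho> powr (-(E/2))"
    using eventually_ge_at_top[of T]
  proof eventually_elim
    case (elim \<rho>)
    define s where "s = sqrt (T / \<rho>)"
    have s: "0 < s" "s \<le> 1" using T elim by (auto simp: s_def)
    have powr_s: "s powr E = T powr (E/2) * \<rho> powr (-(E/2))"
      using T elim
      by (simp add: s_def powr_half_sqrt[symmetric] powr_powr powr_divide powr_minus_divide)
    have "(X \<omega>)\<^sup>2 < T / \<rho> \<longleftrightarrow> X \<omega> < s" if "\<omega> \<in> space M" for \<omega>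
      using nonneg[OF that] real_sqrt_less_iff[of "(X \<omega>)\<^sup>2" "T / \<rho>"] by (simp add: s_def)
    then have "{\<omega>\<in>space M. (X \<omega>)\<^sup>2 < T / \<rho>} = {\<omega>\<in>space M. X \<omega> < s}"
      by auto
    with powr_s show ?case using C(2)[OF s(1)] c(2)[OF s] by (simp add: mult.assoc)
  qed
  then show ?thesis
    by (rule ln_ratio_tendsto_of_powr_bounds[rotated 2]) (use C c T in auto)
qed

lemma lower_tail_exponent_constants:
  assumes "\<And>j. j \<in> J \<Longrightarrow> lower_tail_exponent M (X j) (p j)"
  shows "\<exists>C c. \<forall>j\<in>J. 0 < C j \<and> 0 < c j
    \<and> (\<forall>x>0. measure M {\<omega>\<in>space M. X j \<omega> < x} \<le> C j * x powr p j)
    \<and> (\<forall>x. 0 < x \<and> x \<le> 1 \<longrightarrow> c j * x powr p j \<le> measure M {\<omega>\<in>space M. X j \<omega> < x})"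
proof -
  have "\<forall>j\<in>J. \<exists>C. 0 < C \<and> (\<forall>x>0. measure M {\<omega>\<in>space M. X j \<omega> < x} \<le> C * x powr p j)"
    using assms unfolding lower_tail_exponent_def by blast
  from bchoice[OF this] obtain C
    where C: "\<forall>j\<in>J. 0 < C j \<and> (\<forall>x>0. measure M {\<omega>\<in>space M. X j \<omega> < x} \<le> C j * x powr p j)" ..
  have "\<forall>j\<in>J. \<exists>c. 0 < c \<and> (\<forall>x. 0 < x \<and> x \<le> 1 \<longrightarrow> c * x powr p j \<le> measure M {\<omega>\<in>space M. X j \<omega> < x})"
    using assms unfolding lower_tail_exponent_def by blast
  from bchoice[OF this] obtain c
    where c: "\<forall>j\<in>J. 0 < c j
      \<and> (\<forall>x. 0 < x \<and> x \<le> 1 \<longrightarrow> c j * x powr p j \<le> measure M {\<omega>\<in>space M. X j \<omega> < x})" ..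
  from C c show ?thesis by (intro exI[of _ C] exI[of _ c]) simp
qed

section \<open>Nakagami moduli and their products\<close>

lemma nn_integral_powr_interval:
  fixes a c u :: real
  assumes "-1 < a" "0 \<le> u" "0 \<le> c"
  shows "(\<integral>\<^sup>+x. ennreal (indicator {0..u} x * (c * x powr a)) \<partial>lborel)
    = ennreal (c * u powr (a + 1) / (a + 1))"
proof (rule nn_integral_has_integral_lebesgue)
  show "((\<lambda>x. c * x powr a) has_integral c * u powr (a + 1) / (a + 1)) {0..u}"
    using has_integral_mult_right[OF has_integral_powr_from_0[of a u], of c] assms by simp
qed (use assms in auto)

lemma nakagami_density_le:
  assumes "0 < m" "0 \<le> x"
  shows "nakagami_density m x \<le> 2 * m powr m / Gamma m * x powr (2*m - 1)"
proof -
  have "exp (- m * x\<^sup>2) \<le> 1" using assms by simp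
  from mult_left_mono[OF this, of "2 * m powr m / Gamma m * x powr (2*m - 1)"]
  show ?thesis using assms by (simp add: nakagami_density_def)
qed

lemma nakagami_density_ge:
  assumes "0 < m" "0 \<le> x" "x \<le> 1"
  shows "exp (-m) * (2 * m powr m / Gamma m * x powr (2*m - 1)) \<le> nakagami_density m x"
proof -
  have "exp (-m) \<le> exp (- m * x\<^sup>2)"
    using assms by (auto intro!: mult_left_le_one_le simp: power_le_one)
  from mult_left_mono[OF this, of "2 * m powr m / Gamma m * x powr (2*m - 1)"]
  show ?thesis using assms by (simp add: nakagami_density_def mult.commute)
qed

context prob_space
begin

lemma emeasure_less_distributed:
  fixes X :: "'a \<Rightarrow> real"
  assumes "distributed M lborel X f"
  shows "emeasure M {\<omega>\<in>space M. X \<omega> < u} = (\<integral>\<^sup>+x. f x * indicator {..<u} x \<partial>lborel)"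
proof -
  have "{\<omega>\<in>space M. X \<omega> < u} = X -` {..<u} \<inter> space M" by auto
  then show ?thesis by (simp add: distributed_emeasure[OF assms])
qed

lemma nakagami_cdf_le:
  assumes m: "0 < m" and X: "distributed M lborel X (\<lambda>x. ennreal (nakagami_density m x))"
    and u: "0 < u"
  shows "prob {\<omega>\<in>space M. X \<omega> < u} \<le> m powr m / (m * Gamma m) * u powr (2*m)"
proof -
  define A where "A = 2 * m powr m / Gamma m"
  have A: "0 \<le> A" using m by (simp add: A_def)
  have "emeasure M {\<omega>\<in>space M. X \<omega> < u}
      \<le> (\<integral>\<^sup>+x. ennreal (indicator {0..u} x * (A * x powr (2*m - 1))) \<partial>lborel)"
    unfolding emeasure_less_distributed[OF X]
  proof (intro nn_integral_mono)
    fix x :: real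
    show "ennreal (nakagami_density m x) * indicator {..<u} x
        \<le> ennreal (indicator {0..u} x * (A * x powr (2*m - 1)))"
      using nakagami_density_le[OF m, of x]
      by (cases "0 \<le> x") (auto simp: indicator_def A_def nakagami_density_def intro: ennreal_leI)
  qed
  also have "\<dots> = ennreal (A * u powr (2*m - 1 + 1) / (2*m - 1 + 1))"
    by (rule nn_integral_powr_interval) (use u m A in auto)
  also have "\<dots> = ennreal (m powr m / (m * Gamma m) * u powr (2*m))"
    using m by (simp add: A_def field_simps)
  finally show ?thesis
    using m by (simp add: emeasure_eq_measure ennreal_le_iff)
qed

lemma nakagami_cdf_ge:
  assumes m: "0 < m" and X: "distributed M lborel X (\<lambda>x. ennreal (nakagami_density m x))"
    and u: "0 < u" "u \<le> 1"
  shows "exp (-m) * (m powr m / (m * Gamma m)) * u powr (2*m) \<le> prob {\<omega>\<in>space M. X \<omega> < u}"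
proof -
  define A where "A = 2 * m powr m / Gamma m"
  have A: "0 \<le> A" using m by (simp add: A_def)
  have "ennreal (exp (-m) * (m powr m / (m * Gamma m)) * u powr (2*m))
      = ennreal (exp (-m) * A * u powr (2*m - 1 + 1) / (2*m - 1 + 1))"
    using m by (simp add: A_def field_simps)
  also have "\<dots> = (\<integral>\<^sup>+x. ennreal (indicator {0..u} x * (exp (-m) * A * x powr (2*m - 1))) \<partial>lborel)"
    by (rule nn_integral_powr_interval[symmetric]) (use u m A in auto)
  also have "\<dots> \<le> emeasure M {\<omega>\<in>space M. X \<omega> < u}"
    unfolding emeasure_less_distributed[OF X]
  proof (intro nn_integral_mono_AE)
    show "AE x in lborel. ennreal (indicator {0..u} x * (exp (-m) * A * x powr (2*m - 1)))
        \<le> ennreal (nakagami_density m x) * indicator {..<u} x"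
      using AE_lborel_singleton[of u]
    proof eventually_elim
      case (elim x)
      then show ?case
        using nakagami_density_ge[OF m, of x] u
        by (cases "0 \<le> x \<and> x \<le> u") (auto simp: indicator_def A_def mult.assoc intro: ennreal_leI)
    qed
  qed
  finally show ?thesis by (simp add: emeasure_eq_measure)
qed

lemma lower_tail_exponent_nakagami:
  assumes "0 < m" and "distributed M lborel X (\<lambda>x. ennreal (nakagami_density m x))"
  shows "lower_tail_exponent M X (2*m)"
proof -
  define \<kappa> where "\<kappa> = m powr m / (m * Gamma m)"
  have \<kappa>: "0 < \<kappa>" using assms by (simp add: \<kappa>_def)
  show ?thesis
    unfolding lower_tail_exponent_def
  proof (intro conjI)
    show "\<exists>C>0. \<forall>x>0. prob {\<omega>\<in>space M. X \<omega> < x} \<le> C * x powr (2*m)"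
      using nakagami_cdf_le[OF assms] \<kappa> unfolding \<kappa>_def[symmetric] by blast
    show "\<exists>c>0. \<forall>x. 0 < x \<and> x \<le> 1 \<longrightarrow> c * x powr (2*m) \<le> prob {\<omega>\<in>space M. X \<omega> < x}"
      using nakagami_cdf_ge[OF assms] \<kappa> unfolding \<kappa>_def[symmetric]
      by (intro exI[of _ "exp (-m) * \<kappa>"]) auto
  qed
qed

end

lemma exists_dyadic_bracket:
  fixes y :: real
  assumes "0 < y" "y < 1"
  shows "\<exists>j::nat. 2 powr (- real (Suc j)) \<le> y \<and> y < 2 powr (- real j)"
proof -
  obtain n where n: "(1/2::real) ^ n < y" using real_arch_pow_inv[of y "1/2"] assms by auto
  have dyadic: "(2::real) powr (- real k) = (1/2) ^ k" for k
    by (simp add: powr_minus_divide powr_realpow power_one_over)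
  have "\<exists>k<n. (\<forall>i\<le>k. \<not> 2 powr (- real i) \<le> y) \<and> 2 powr (- real (Suc k)) \<le> y"
    by (rule ex_least_nat_less) (use n assms in \<open>auto simp: dyadic\<close>)
  then obtain k where "\<not> 2 powr (- real k) \<le> y" "2 powr (- real (Suc k)) \<le> y" by auto
  then show ?thesis by (intro exI[of _ k]) auto
qed

lemma mult_less_dyadic_cases:
  fixes x y z :: real
  assumes "0 \<le> y" "y * z < x"
  shows "y < x \<or> z \<le> 0 \<or> (\<exists>j::nat. z < 2 powr (- real j) \<and> y < x * 2 powr real (Suc j))"
proof (cases "z \<le> 0 \<or> 1 \<le> z")
  case True
  then show ?thesis using assms mult_le_cancel_left1[of y z] by auto
next
  case False
  then obtain j where j: "2 powr (- real (Suc j)) \<le> z" "z < 2 powr (- real j)"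
    using exists_dyadic_bracket[of z] by auto
  have "y * 2 powr (- real (Suc j)) < x"
    using mult_left_mono[OF j(1) assms(1)] assms(2) by linarith
  moreover have "2 powr (- real (Suc j)) = 1 / 2 powr real (Suc j)"
    by (rule powr_minus_divide)
  ultimately have "y < x * 2 powr real (Suc j)"
    by (simp add: divide_less_eq)
  then show ?thesis using j by auto
qed

context prob_space
begin

lemma prob_indep_less:
  fixes X Y :: "'a \<Rightarrow> real"
  assumes "indep_var borel X borel Y"
  shows "prob {\<omega>\<in>space M. X \<omega> < a \<and> Y \<omega> < b}
    = prob {\<omega>\<in>space M. X \<omega> < a} * prob {\<omega>\<in>space M. Y \<omega> < b}"
  using prob_indep_random_variable[OF assms, of "{..<a}" "{..<b}"] by (simp add: lessThan_borel)

lemma prob_nonpos_eq_0: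
  fixes Y :: "'a \<Rightarrow> real"
  assumes Y: "Y \<in> borel_measurable M" and q: "0 < q"
    and Y_le: "\<And>u. 0 < u \<Longrightarrow> prob {\<omega>\<in>space M. Y \<omega> < u} \<le> C * u powr q"
  shows "prob {\<omega>\<in>space M. Y \<omega> \<le> 0} = 0"
proof -
  have "prob {\<omega>\<in>space M. Y \<omega> \<le> 0} \<le> 0"
  proof (rule tendsto_le[OF trivial_limit_at_right_real])
    show "((\<lambda>u. C * u powr q) \<longlongrightarrow> 0) (at_right 0)"
      using q
      by (intro tendsto_eq_intros) (auto intro: eventually_mono[OF eventually_at_right_less])
    show "\<forall>\<^sub>F u in at_right 0. prob {\<omega>\<in>space M. Y \<omega> \<le> 0} \<le> C * u powr q"
      using eventually_at_right_less[of "0::real"]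
    proof eventually_elim
      case (elim u)
      have "prob {\<omega>\<in>space M. Y \<omega> \<le> 0} \<le> prob {\<omega>\<in>space M. Y \<omega> < u}"
        by (rule finite_measure_mono) (use elim Y in auto)
      then show ?case using Y_le[OF elim] by simp
    qed
  qed simp
  then show ?thesis using measure_nonneg antisym by blast
qed

lemma prob_dyadic_strip_le:
  fixes X Y :: "'a \<Rightarrow> real"
  assumes indep: "indep_var borel X borel Y"
    and X_le: "\<And>u. 0 < u \<Longrightarrow> prob {\<omega>\<in>space M. X \<omega> < u} \<le> C1 * u powr p"
    and Y_le: "\<And>u. 0 < u \<Longrightarrow> prob {\<omega>\<in>space M. Y \<omega> < u} \<le> C2 * u powr q"
    and C: "0 \<le> C1" "0 \<le> C2" and x: "0 < x"
  shows "prob {\<omega>\<in>space M. Y \<omega> < 2 powr (- real j) \<and> X \<omega> < x * 2 powr real (Suc j)}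
    \<le> C1 * C2 * 2 powr p * x powr p * (2 powr (p - q)) ^ j"
proof -
  have "prob {\<omega>\<in>space M. Y \<omega> < 2 powr (- real j) \<and> X \<omega> < x * 2 powr real (Suc j)}
      = prob {\<omega>\<in>space M. X \<omega> < x * 2 powr real (Suc j)} * prob {\<omega>\<in>space M. Y \<omega> < 2 powr (- real j)}"
    by (subst prob_indep_less[OF indep, symmetric]) (auto intro!: arg_cong[where f=prob])
  also have "\<dots> \<le> (C1 * (x * 2 powr real (Suc j)) powr p) * (C2 * (2 powr (- real j)) powr q)"
    by (intro mult_mono X_le Y_le) (use x C in auto)
  also have "\<dots> = C1 * C2 * 2 powr p * x powr p * (2 powr (p - q)) ^ j"
  proof -
    have "(x * 2 powr real (Suc j)) powr p = x powr p * 2 powr p * 2 powr (real j * p)"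
      using x by (simp add: powr_mult powr_powr powr_add algebra_simps)
    moreover have "(2 powr (p - q)) ^ j = 2 powr (real j * p) * (2 powr (- real j)) powr q"
      by (simp add: powr_power powr_powr powr_add[symmetric] algebra_simps)
    ultimately show ?thesis by (simp add: algebra_simps)
  qed
  finally show ?thesis .
qed

(* Split according to the dyadic range of Y: on 2^-(j+1) <= Y < 2^-j the event forces
   X < x 2^(j+1), and since p < q these strips contribute a geometric series. *)
lemma prob_mult_less_le:
  fixes X Y :: "'a \<Rightarrow> real"
  assumes indep: "indep_var borel X borel Y" and X_nonneg: "\<And>\<omega>. \<omega> \<in> space M \<Longrightarrow> 0 \<le> X \<omega>"
    and X_le: "\<And>u. 0 < u \<Longrightarrow> prob {\<omega>\<in>space M. X \<omega> < u} \<le> C1 * u powr p"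
    and Y_le: "\<And>u. 0 < u \<Longrightarrow> prob {\<omega>\<in>space M. Y \<omega> < u} \<le> C2 * u powr q"
    and pq: "0 < p" "p < q" and C: "0 \<le> C1" "0 \<le> C2" and x: "0 < x"
  shows "prob {\<omega>\<in>space M. X \<omega> * Y \<omega> < x}
    \<le> (C1 + C1 * C2 * 2 powr p / (1 - 2 powr (p - q))) * x powr p"
proof -
  note X = indep_var_rv1[OF indep] and Y = indep_var_rv2[OF indep]
  define r where "r = (2::real) powr (p - q)"
  have r: "0 < r" "r < 1" using pq by (auto simp: r_def intro!: powr_less_one)
  define S where "S j = {\<omega>\<in>space M. Y \<omega> < 2 powr (- real j) \<and> X \<omega> < x * 2 powr real (Suc j)}" for j
  have S: "S j \<in> sets M" for j unfolding S_def using X Y by measurable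
  have cover: "{\<omega>\<in>space M. X \<omega> * Y \<omega> < x}
      \<subseteq> ({\<omega>\<in>space M. X \<omega> < x} \<union> {\<omega>\<in>space M. Y \<omega> \<le> 0}) \<union> (\<Union>j. S j)"
  proof
    fix \<omega> assume \<omega>: "\<omega> \<in> {\<omega>\<in>space M. X \<omega> * Y \<omega> < x}"
    then have "X \<omega> < x \<or> Y \<omega> \<le> 0 \<or> (\<exists>j. Y \<omega> < 2 powr (- real j) \<and> X \<omega> < x * 2 powr real (Suc j))"
      using mult_less_dyadic_cases[of "X \<omega>" "Y \<omega>" x] X_nonneg by blast
    then show "\<omega> \<in> ({\<omega>\<in>space M. X \<omega> < x} \<union> {\<omega>\<in>space M. Y \<omega> \<le> 0}) \<union> (\<Union>j. S j)"
      using \<omega> unfolding S_def by blast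
  qed
  have prob_S: "prob (S j) \<le> C1 * C2 * 2 powr p * x powr p * r ^ j" for j
    unfolding S_def r_def by (rule prob_dyadic_strip_le[OF indep X_le Y_le C x])
  have summable: "summable (\<lambda>j. C1 * C2 * 2 powr p * x powr p * r ^ j)"
    using r by (intro summable_mult summable_geometric) auto
  have "prob {\<omega>\<in>space M. X \<omega> * Y \<omega> < x}
      \<le> prob ({\<omega>\<in>space M. X \<omega> < x} \<union> {\<omega>\<in>space M. Y \<omega> \<le> 0}) + prob (\<Union>j. S j)"
    by (rule order.trans[OF finite_measure_mono[OF cover] measure_Un_le]) (use X Y S in auto)
  also have "\<dots> \<le> (prob {\<omega>\<in>space M. X \<omega> < x} + prob {\<omega>\<in>space M. Y \<omega> \<le> 0}) + (\<Sum>j. prob (S j))"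
    by (intro add_mono measure_Un_le finite_measure_subadditive_countably
        summable_comparison_test[OF _ summable]) (use X Y S prob_S in auto)
  also have "(\<Sum>j. prob (S j)) \<le> (\<Sum>j. C1 * C2 * 2 powr p * x powr p * r ^ j)"
    by (intro suminf_le prob_S summable summable_comparison_test[OF _ summable])
      (use prob_S in auto)
  also have "\<dots> = C1 * C2 * 2 powr p * x powr p / (1 - r)"
    using r by (simp add: suminf_mult suminf_geometric)
  also have "prob {\<omega>\<in>space M. Y \<omega> \<le> 0} = 0"
    by (rule prob_nonpos_eq_0[OF Y _ Y_le]) (use pq in auto)
  finally show ?thesis
    using X_le[OF x] unfolding r_def by (simp add: algebra_simps)
qed

lemma prob_mult_less_ge:
  fixes X Y :: "'a \<Rightarrow> real"
  assumes indep: "indep_var borel X borel Y" and X_nonneg: "\<And>\<omega>. \<omega> \<in> space M \<Longrightarrow> 0 \<le> X \<omega>"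
  shows "prob {\<omega>\<in>space M. X \<omega> < x} * prob {\<omega>\<in>space M. Y \<omega> < 1} \<le> prob {\<omega>\<in>space M. X \<omega> * Y \<omega> < x}"
proof -
  note X = indep_var_rv1[OF indep] and Y = indep_var_rv2[OF indep]
  have "{\<omega>\<in>space M. X \<omega> < x \<and> Y \<omega> < 1} \<subseteq> {\<omega>\<in>space M. X \<omega> * Y \<omega> < x}"
    using X_nonneg by (auto intro: le_less_trans[OF mult_left_le])
  then have "prob {\<omega>\<in>space M. X \<omega> < x \<and> Y \<omega> < 1} \<le> prob {\<omega>\<in>space M. X \<omega> * Y \<omega> < x}"
    by (rule finite_measure_mono) (use X Y in measurable)
  then show ?thesis by (simp add: prob_indep_less[OF indep])
qed

lemma lower_tail_exponent_mult:
  fixes X Y :: "'a \<Rightarrow> real"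
  assumes indep: "indep_var borel X borel Y" and X_nonneg: "\<And>\<omega>. \<omega> \<in> space M \<Longrightarrow> 0 \<le> X \<omega>"
    and X: "lower_tail_exponent M X p" and Y: "lower_tail_exponent M Y q" and pq: "0 < p" "p < q"
  shows "lower_tail_exponent M (\<lambda>\<omega>. X \<omega> * Y \<omega>) p"
proof -
  obtain C1 c1 where C1: "0 < C1" "\<And>u. 0 < u \<Longrightarrow> prob {\<omega>\<in>space M. X \<omega> < u} \<le> C1 * u powr p"
    and c1: "0 < c1" "\<And>u. 0 < u \<Longrightarrow> u \<le> 1 \<Longrightarrow> c1 * u powr p \<le> prob {\<omega>\<in>space M. X \<omega> < u}"
    using X unfolding lower_tail_exponent_def by blast
  obtain C2 c2 where C2: "0 < C2" "\<And>u. 0 < u \<Longrightarrow> prob {\<omega>\<in>space M. Y \<omega> < u} \<le> C2 * u powr q"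
    and c2: "0 < c2" "\<And>u. 0 < u \<Longrightarrow> u \<le> 1 \<Longrightarrow> c2 * u powr q \<le> prob {\<omega>\<in>space M. Y \<omega> < u}"
    using Y unfolding lower_tail_exponent_def by blast
  define C where "C = C1 + C1 * C2 * 2 powr p / (1 - 2 powr (p - q))"
  have C: "0 < C"
    using C1 C2 pq by (auto simp: C_def intro!: add_pos_nonneg divide_nonneg_pos powr_less_one)
  have upper: "prob {\<omega>\<in>space M. X \<omega> * Y \<omega> < u} \<le> C * u powr p" if "0 < u" for u
    unfolding C_def
    by (rule prob_mult_less_le[OF indep X_nonneg C1(2) C2(2) pq]) (use C1 C2 that in auto)
  have lower: "c1 * c2 * u powr p \<le> prob {\<omega>\<in>space M. X \<omega> * Y \<omega> < u}" if "0 < u" "u \<le> 1" for u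
  proof -
    have "c1 * u powr p * c2 \<le> prob {\<omega>\<in>space M. X \<omega> < u} * prob {\<omega>\<in>space M. Y \<omega> < 1}"
      using c2(2)[of 1] by (intro mult_mono c1(2) that) (use c1 c2 in auto)
    then show ?thesis using prob_mult_less_ge[OF indep X_nonneg, of u] by (simp add: mult_ac)
  qed
  have "0 < c1 * c2" using c1 c2 by simp
  then show ?thesis
    unfolding lower_tail_exponent_def using C upper lower by blast
qed

end

section \<open>Order statistics of independent gains\<close>

lemma sorted_nth_less_iff:
  fixes xs :: "real list"
  assumes "sorted xs" "n < length xs"
  shows "xs ! n < a \<longleftrightarrow> Suc n \<le> length (filter (\<lambda>x. x < a) xs)"
  using assms
proof (induction xs arbitrary: n)
  case Nil
  then show ?case by simp
next
  case (Cons x xs)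
  show ?case
  proof (cases "x < a")
    case True
    then show ?thesis using Cons by (cases n) auto
  next
    case False
    with Cons.prems have none: "\<forall>y\<in>set (x # xs). \<not> y < a" by auto
    then have "\<not> (x # xs) ! n < a" using nth_mem[OF Cons.prems(2)] by blast
    then show ?thesis using none by (simp add: filter_empty_conv)
  qed
qed

lemma order_stat_less_iff:
  assumes n: "n \<in> {1..N}"
  shows "order_stat N f n < a \<longleftrightarrow> n \<le> card {i\<in>{1..N}. f i < a}"
proof -
  let ?xs = "sort (map f [1..<Suc N])"
  have "order_stat N f n < a \<longleftrightarrow> Suc (n - 1) \<le> length (filter (\<lambda>x. x < a) ?xs)"
    unfolding order_stat_def by (rule sorted_nth_less_iff) (use n in auto)
  also have "length (filter (\<lambda>x. x < a) ?xs) = length (filter (\<lambda>i. f i < a) [1..<Suc N])"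
    by (simp add: filter_sort filter_map comp_def)
  also have "\<dots> = card {i\<in>{1..N}. f i < a}"
    by (subst distinct_length_filter) (auto intro!: arg_cong[where f=card])
  finally show ?thesis using n by simp
qed

lemma order_stat_less_iff_ex_subset:
  assumes n: "n \<in> {1..N}"
  shows "order_stat N f n < a \<longleftrightarrow> (\<exists>S. S \<subseteq> {1..N} \<and> card S = n \<and> (\<forall>i\<in>S. f i < a))"
proof -
  have "n \<le> card {i\<in>{1..N}. f i < a} \<longleftrightarrow> (\<exists>S. S \<subseteq> {1..N} \<and> card S = n \<and> (\<forall>i\<in>S. f i < a))"
  proof
    assume "n \<le> card {i\<in>{1..N}. f i < a}"
    then obtain S where "S \<subseteq> {i\<in>{1..N}. f i < a}" "card S = n" by (rule obtain_subset_with_card_n)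
    then show "\<exists>S. S \<subseteq> {1..N} \<and> card S = n \<and> (\<forall>i\<in>S. f i < a)" by (intro exI[of _ S]) auto
  next
    assume "\<exists>S. S \<subseteq> {1..N} \<and> card S = n \<and> (\<forall>i\<in>S. f i < a)"
    then obtain S where "S \<subseteq> {1..N}" "card S = n" "\<forall>i\<in>S. f i < a" by blast
    then have "S \<subseteq> {i\<in>{1..N}. f i < a}" by auto
    then show "n \<le> card {i\<in>{1..N}. f i < a}"
      using card_mono[of "{i\<in>{1..N}. f i < a}" S] \<open>card S = n\<close> by simp
  qed
  then show ?thesis using order_stat_less_iff[OF n] by simp
qed

lemma order_stat_nonneg:
  assumes "n \<in> {1..N}" "\<And>i. i \<in> {1..N} \<Longrightarrow> 0 \<le> f i"
  shows "0 \<le> order_stat N f n"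
proof -
  have "order_stat N f n \<in> set (sort (map f [1..<Suc N]))"
    unfolding order_stat_def by (rule nth_mem) (use assms in auto)
  then show ?thesis using assms by auto
qed

lemma sum_snd_Times:
  fixes f :: "'b \<Rightarrow> real"
  shows "(\<Sum>j\<in>A \<times> B. f (snd j)) = real (card A) * (\<Sum>k\<in>B. f k)"
  using sum.cartesian_product[of "\<lambda>_ k. f k" B A] by (simp add: case_prod_beta)

context prob_space
begin

lemma indep_var_of_indep_vars:
  assumes indep: "indep_vars M' X I" and "i \<in> I" "j \<in> I" "i \<noteq> j"
  shows "indep_var (M' i) (X i) (M' j) (X j)"
proof -
  have "indep_var (M' i) ((\<lambda>f. f i) \<circ> (\<lambda>\<omega>. restrict (\<lambda>i. X i \<omega>) {i}))
                  (M' j) ((\<lambda>f. f j) \<circ> (\<lambda>\<omega>. restrict (\<lambda>i. X i \<omega>) {j}))"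
    using assms by (intro indep_var_compose[OF indep_var_restrict[OF indep]]) auto
  then show ?thesis by (simp add: comp_def)
qed

lemma borel_measurable_order_stat:
  fixes Z :: "nat \<Rightarrow> 'a \<Rightarrow> real"
  assumes Z: "\<And>i. i \<in> {1..N} \<Longrightarrow> Z i \<in> borel_measurable M" and n: "n \<in> {1..N}"
  shows "(\<lambda>\<omega>. order_stat N (\<lambda>i. Z i \<omega>) n) \<in> borel_measurable M"
proof (rule borel_measurable_iff_less[THEN iffD2], rule allI)
  fix s
  define Ss where "Ss = {S. S \<subseteq> {1..N} \<and> card S = n}"
  have "{\<omega>\<in>space M. order_stat N (\<lambda>i. Z i \<omega>) n < s} = (\<Union>S\<in>Ss. {\<omega>\<in>space M. \<forall>i\<in>S. Z i \<omega> < s})"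
    by (rule set_eqI) (simp add: Ss_def order_stat_less_iff_ex_subset[OF n])
  also have "\<dots> \<in> sets M"
  proof (intro sets.finite_UN sets.sets_Collect_finite_All ballI)
    show "finite Ss" by (rule finite_subset[of _ "Pow {1..N}"]) (auto simp: Ss_def)
    fix S assume S: "S \<in> Ss"
    then show "finite S" by (auto simp: Ss_def intro: finite_subset)
    fix i assume "i \<in> S"
    then show "{\<omega>\<in>space M. Z i \<omega> < s} \<in> sets M" using S Z by (auto simp: Ss_def)
  qed
  finally show "{\<omega>\<in>space M. order_stat N (\<lambda>i. Z i \<omega>) n < s} \<in> sets M" .
qed

lemma prob_Inter_less_eq_prod:
  fixes W :: "'i \<Rightarrow> 'a \<Rightarrow> real"
  assumes indep: "indep_vars (\<lambda>_. borel) W I" and J: "J \<subseteq> I" "J \<noteq> {}" "finite J"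
  shows "prob (\<Inter>j\<in>J. {\<omega>\<in>space M. W j \<omega> < c j}) = (\<Prod>j\<in>J. prob {\<omega>\<in>space M. W j \<omega> < c j})"
proof -
  have eq: "{\<omega>\<in>space M. W j \<omega> < c j} = W j -` {..<c j} \<inter> space M" for j by auto
  show ?thesis unfolding eq by (rule indep_varsD[OF indep]) (use J in auto)
qed

lemma prob_Inter_less_le:
  fixes W :: "'i \<Rightarrow> 'a \<Rightarrow> real"
  assumes indep: "indep_vars (\<lambda>_. borel) W I" and J: "J \<subseteq> I" "J \<noteq> {}" "finite J"
    and W_le: "\<And>j x. j \<in> J \<Longrightarrow> 0 < x \<Longrightarrow> prob {\<omega>\<in>space M. W j \<omega> < x} \<le> C j * x powr q j"
    and a: "\<And>j. j \<in> J \<Longrightarrow> 0 < a j" and s: "0 < s"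
  shows "prob (\<Inter>j\<in>J. {\<omega>\<in>space M. W j \<omega> < a j * s})
    \<le> (\<Prod>j\<in>J. C j * a j powr q j) * s powr (\<Sum>j\<in>J. q j)"
proof -
  have "prob (\<Inter>j\<in>J. {\<omega>\<in>space M. W j \<omega> < a j * s}) = (\<Prod>j\<in>J. prob {\<omega>\<in>space M. W j \<omega> < a j * s})"
    by (rule prob_Inter_less_eq_prod[OF indep J])
  also have "\<dots> \<le> (\<Prod>j\<in>J. C j * (a j * s) powr q j)"
    by (intro prod_mono conjI measure_nonneg W_le) (use a s in auto)
  also have "\<dots> = (\<Prod>j\<in>J. C j * a j powr q j) * s powr (\<Sum>j\<in>J. q j)"
    using a s J by (simp add: powr_mult powr_sum prod.distrib less_imp_le mult.assoc)
  finally show ?thesis .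
qed

lemma prob_Inter_less_ge:
  fixes W :: "'i \<Rightarrow> 'a \<Rightarrow> real"
  assumes indep: "indep_vars (\<lambda>_. borel) W I" and J: "J \<subseteq> I" "J \<noteq> {}" "finite J"
    and W_ge: "\<And>j. j \<in> J \<Longrightarrow> c j * t powr q j \<le> prob {\<omega>\<in>space M. W j \<omega> < t}"
    and c: "\<And>j. j \<in> J \<Longrightarrow> 0 \<le> c j" and t: "0 < t"
  shows "(\<Prod>j\<in>J. c j) * t powr (\<Sum>j\<in>J. q j) \<le> prob (\<Inter>j\<in>J. {\<omega>\<in>space M. W j \<omega> < t})"
proof -
  have "(\<Prod>j\<in>J. c j) * t powr (\<Sum>j\<in>J. q j) = (\<Prod>j\<in>J. c j * t powr q j)"
    using t J by (simp add: powr_sum prod.distrib)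
  also have "\<dots> \<le> (\<Prod>j\<in>J. prob {\<omega>\<in>space M. W j \<omega> < t})"
    by (intro prod_mono conjI W_ge) (use c t in auto)
  also have "\<dots> = prob (\<Inter>j\<in>J. {\<omega>\<in>space M. W j \<omega> < t})"
    by (rule prob_Inter_less_eq_prod[OF indep J, symmetric])
  finally show ?thesis .
qed

lemma prob_order_stat_less_le:
  fixes W :: "nat \<times> nat \<Rightarrow> 'a \<Rightarrow> real" and Z :: "nat \<Rightarrow> 'a \<Rightarrow> real"
  assumes indep: "indep_vars (\<lambda>_. borel) W ({1..N} \<times> {0..K})"
    and W_le: "\<And>j x. j \<in> {1..N} \<times> {0..K} \<Longrightarrow> 0 < x
      \<Longrightarrow> prob {\<omega>\<in>space M. W j \<omega> < x} \<le> C j * x powr p (snd j)"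
    and Z_less: "\<And>i k \<omega>. i \<in> {1..N} \<Longrightarrow> k \<in> {0..K} \<Longrightarrow> \<omega> \<in> space M \<Longrightarrow> Z i \<omega> < s \<Longrightarrow> W (i, k) \<omega> < a k * s"
    and a: "\<And>k. 0 < a k" and s: "0 < s" and n: "n \<in> {1..N}"
  shows "prob {\<omega>\<in>space M. order_stat N (\<lambda>i. Z i \<omega>) n < s}
    \<le> (\<Sum>S | S \<subseteq> {1..N} \<and> card S = n. \<Prod>j\<in>S \<times> {0..K}. C j * a (snd j) powr p (snd j))
        * s powr (real n * (\<Sum>k=0..K. p k))"
proof -
  define Ss where "Ss = {S. S \<subseteq> {1..N} \<and> card S = n}"
  define B where "B S = (\<Inter>j\<in>S \<times> {0..K}. {\<omega>\<in>space M. W j \<omega> < a (snd j) * s})" for S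
  have Ss: "finite Ss" by (rule finite_subset[of _ "Pow {1..N}"]) (auto simp: Ss_def)
  have S: "S \<subseteq> {1..N}" "S \<noteq> {}" "finite S" "card S = n" if "S \<in> Ss" for S
    using that n by (auto simp: Ss_def intro: finite_subset)
  have W_meas: "W j \<in> borel_measurable M" if "j \<in> {1..N} \<times> {0..K}" for j
    using indep that unfolding indep_vars_def by auto
  have B_meas: "B S \<in> sets M" if "S \<in> Ss" for S
    unfolding B_def using S[OF that] W_meas by (intro sets.finite_INT) auto
  have cover: "{\<omega>\<in>space M. order_stat N (\<lambda>i. Z i \<omega>) n < s} \<subseteq> (\<Union>S\<in>Ss. B S)"
  proof
    fix \<omega> assume \<omega>: "\<omega> \<in> {\<omega>\<in>space M. order_stat N (\<lambda>i. Z i \<omega>) n < s}"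
    then obtain S where S_in: "S \<in> Ss" and below: "\<forall>i\<in>S. Z i \<omega> < s"
      by (auto simp: Ss_def order_stat_less_iff_ex_subset[OF n])
    have "\<omega> \<in> B S"
      unfolding B_def using \<omega> S(1)[OF S_in] below by (auto intro!: Z_less)
    then show "\<omega> \<in> (\<Union>S\<in>Ss. B S)" using S_in by blast
  qed
  have prob_B: "prob (B S)
      \<le> (\<Prod>j\<in>S \<times> {0..K}. C j * a (snd j) powr p (snd j)) * s powr (real n * (\<Sum>k=0..K. p k))"
    if "S \<in> Ss" for S
  proof -
    have "prob (B S) \<le> (\<Prod>j\<in>S \<times> {0..K}. C j * a (snd j) powr p (snd j))
        * s powr (\<Sum>j\<in>S \<times> {0..K}. p (snd j))"
      unfolding B_def
      by (rule prob_Inter_less_le[OF indep]) (use S[OF that] a s in \<open>auto intro!: W_le\<close>)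
    then show ?thesis using S[OF that] by (simp add: sum_snd_Times)
  qed
  have "prob {\<omega>\<in>space M. order_stat N (\<lambda>i. Z i \<omega>) n < s} \<le> prob (\<Union>S\<in>Ss. B S)"
    by (rule finite_measure_mono[OF cover]) (use Ss B_meas in auto)
  also have "\<dots> \<le> (\<Sum>S\<in>Ss. prob (B S))"
    by (rule finite_measure_subadditive_finite[OF Ss]) (use B_meas in auto)
  also have "\<dots> \<le> (\<Sum>S\<in>Ss. (\<Prod>j\<in>S \<times> {0..K}. C j * a (snd j) powr p (snd j))
      * s powr (real n * (\<Sum>k=0..K. p k)))"
    by (rule sum_mono[OF prob_B])
  finally show ?thesis by (simp add: Ss_def sum_distrib_right)
qed

lemma prob_order_stat_less_ge:
  fixes W :: "nat \<times> nat \<Rightarrow> 'a \<Rightarrow> real" and Z :: "nat \<Rightarrow> 'a \<Rightarrow> real"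
  assumes indep: "indep_vars (\<lambda>_. borel) W ({1..N} \<times> {0..K})"
    and W_ge: "\<And>j x. j \<in> {1..N} \<times> {0..K} \<Longrightarrow> 0 < x \<Longrightarrow> x \<le> 1
      \<Longrightarrow> c j * x powr p (snd j) \<le> prob {\<omega>\<in>space M. W j \<omega> < x}"
    and c: "\<And>j. j \<in> {1..N} \<times> {0..K} \<Longrightarrow> 0 \<le> c j"
    and Z_meas: "\<And>i. i \<in> {1..N} \<Longrightarrow> Z i \<in> borel_measurable M"
    and less_Z: "\<And>i \<omega>. i \<in> {1..N} \<Longrightarrow> \<omega> \<in> space M \<Longrightarrow> \<forall>k\<in>{0..K}. W (i, k) \<omega> < t \<Longrightarrow> Z i \<omega> < s"
    and t: "0 < t" "t \<le> 1" and n: "n \<in> {1..N}"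
  shows "(\<Prod>j\<in>{1..n} \<times> {0..K}. c j) * t powr (real n * (\<Sum>k=0..K. p k))
    \<le> prob {\<omega>\<in>space M. order_stat N (\<lambda>i. Z i \<omega>) n < s}"
proof -
  define B where "B = (\<Inter>j\<in>{1..n} \<times> {0..K}. {\<omega>\<in>space M. W j \<omega> < t})"
  have sub: "B \<subseteq> {\<omega>\<in>space M. order_stat N (\<lambda>i. Z i \<omega>) n < s}"
  proof
    fix \<omega> assume \<omega>: "\<omega> \<in> B"
    moreover have "(1, 0) \<in> {1..n} \<times> {0..K}" using n by auto
    ultimately have "\<omega> \<in> space M" unfolding B_def by blast
    moreover have "\<forall>i\<in>{1..n}. Z i \<omega> < s"
      using \<omega> n less_Z \<open>\<omega> \<in> space M\<close> by (auto simp: B_def)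
    ultimately show "\<omega> \<in> {\<omega>\<in>space M. order_stat N (\<lambda>i. Z i \<omega>) n < s}"
      using n by (auto simp: order_stat_less_iff_ex_subset[OF n] intro!: exI[of _ "{1..n}"])
  qed
  have "(\<Prod>j\<in>{1..n} \<times> {0..K}. c j) * t powr (real n * (\<Sum>k=0..K. p k))
      = (\<Prod>j\<in>{1..n} \<times> {0..K}. c j) * t powr (\<Sum>j\<in>{1..n} \<times> {0..K}. p (snd j))"
    by (simp add: sum_snd_Times)
  also have "\<dots> \<le> prob B"
    unfolding B_def by (rule prob_Inter_less_ge[OF indep]) (use n t c in \<open>auto intro!: W_ge\<close>)
  also have "\<dots> \<le> prob {\<omega>\<in>space M. order_stat N (\<lambda>i. Z i \<omega>) n < s}"
    by (rule finite_measure_mono[OF sub])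
      (use borel_measurable_order_stat[OF Z_meas n] in measurable)
  finally show ?thesis .
qed

(* If the n-th smallest Z i is below s, then for some n users every link gain W (i, k) lies below
   a k * s (union bound over the n-subsets); conversely it suffices that users 1, ..., n have all
   their link gains below s / d. *)
lemma lower_tail_exponent_order_stat:
  fixes W :: "nat \<times> nat \<Rightarrow> 'a \<Rightarrow> real" and Z :: "nat \<Rightarrow> 'a \<Rightarrow> real"
  assumes indep: "indep_vars (\<lambda>_. borel) W ({1..N} \<times> {0..K})"
    and W: "\<And>j. j \<in> {1..N} \<times> {0..K} \<Longrightarrow> lower_tail_exponent M (W j) (p (snd j))"
    and Z_meas: "\<And>i. i \<in> {1..N} \<Longrightarrow> Z i \<in> borel_measurable M"
    and Z_less: "\<And>i k \<omega> s. i \<in> {1..N} \<Longrightarrow> k \<in> {0..K} \<Longrightarrow> \<omega> \<in> space M \<Longrightarrow> Z i \<omega> < s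
      \<Longrightarrow> W (i, k) \<omega> < a k * s"
    and less_Z: "\<And>i \<omega> s. i \<in> {1..N} \<Longrightarrow> \<omega> \<in> space M \<Longrightarrow> \<forall>k\<in>{0..K}. W (i, k) \<omega> < s
      \<Longrightarrow> Z i \<omega> < d * s"
    and a: "\<And>k. 0 < a k" and d: "1 \<le> d" and n: "n \<in> {1..N}"
  shows "lower_tail_exponent M (\<lambda>\<omega>. order_stat N (\<lambda>i. Z i \<omega>) n) (real n * (\<Sum>k=0..K. p k))"
proof -
  let ?E = "real n * (\<Sum>k=0..K. p k)"
  from lower_tail_exponent_constants[where J="{1..N} \<times> {0..K}" and X=W and p="\<lambda>j. p (snd j)", OF W]
  obtain C c where "\<forall>j\<in>{1..N} \<times> {0..K}. 0 < C j \<and> 0 < c j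
    \<and> (\<forall>x>0. prob {\<omega>\<in>space M. W j \<omega> < x} \<le> C j * x powr p (snd j))
    \<and> (\<forall>x. 0 < x \<and> x \<le> 1 \<longrightarrow> c j * x powr p (snd j) \<le> prob {\<omega>\<in>space M. W j \<omega> < x})"
    by blast
  then have C_pos: "\<And>j. j \<in> {1..N} \<times> {0..K} \<Longrightarrow> 0 < C j"
    and c_pos: "\<And>j. j \<in> {1..N} \<times> {0..K} \<Longrightarrow> 0 < c j"
    and C: "\<And>j x. j \<in> {1..N} \<times> {0..K} \<Longrightarrow> 0 < x
      \<Longrightarrow> prob {\<omega>\<in>space M. W j \<omega> < x} \<le> C j * x powr p (snd j)"
    and c: "\<And>j x. j \<in> {1..N} \<times> {0..K} \<Longrightarrow> 0 < x \<Longrightarrow> x \<le> 1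
      \<Longrightarrow> c j * x powr p (snd j) \<le> prob {\<omega>\<in>space M. W j \<omega> < x}"
    by blast+
  define B where "B = (\<Sum>S | S \<subseteq> {1..N} \<and> card S = n. \<Prod>j\<in>S \<times> {0..K}. C j * a (snd j) powr p (snd j))"
  define A where "A = (\<Prod>j\<in>{1..n} \<times> {0..K}. c j) * (1 / d) powr ?E"
  have "0 < B"
    unfolding B_def
  proof (rule sum_pos)
    show "finite {S. S \<subseteq> {1..N} \<and> card S = n}"
      by (rule finite_subset[of _ "Pow {1..N}"]) auto
    show "{S. S \<subseteq> {1..N} \<and> card S = n} \<noteq> {}"
      using n by (auto intro!: exI[of _ "{1..n}"])
    have "a k \<noteq> 0" for k using a[of k] by simp
    then show "0 < (\<Prod>j\<in>S \<times> {0..K}. C j * a (snd j) powr p (snd j))"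
      if "S \<in> {S. S \<subseteq> {1..N} \<and> card S = n}" for S
      using that C_pos by (intro prod_pos mult_pos_pos) auto
  qed
  moreover have "0 < A"
    unfolding A_def using c_pos d n by (auto intro!: prod_pos mult_pos_pos)
  moreover have "prob {\<omega>\<in>space M. order_stat N (\<lambda>i. Z i \<omega>) n < s} \<le> B * s powr ?E" if "0 < s" for s
    unfolding B_def by (rule prob_order_stat_less_le[OF indep C Z_less a that n])
  moreover have "A * s powr ?E \<le> prob {\<omega>\<in>space M. order_stat N (\<lambda>i. Z i \<omega>) n < s}"
    if "0 < s" "s \<le> 1" for s
  proof -
    have "A * s powr ?E = (\<Prod>j\<in>{1..n} \<times> {0..K}. c j) * (s / d) powr ?E"
      using that d by (simp add: A_def powr_divide powr_one_eq_one divide_powr_uminus)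
    also have "\<dots> \<le> prob {\<omega>\<in>space M. order_stat N (\<lambda>i. Z i \<omega>) n < s}"
    proof (rule prob_order_stat_less_ge[OF indep c _ Z_meas _ _ _ n])
      show "Z i \<omega> < s" if "i \<in> {1..N}" "\<omega> \<in> space M" "\<forall>k\<in>{0..K}. W (i, k) \<omega> < s / d" for i \<omega>
        using less_Z[OF that] d by simp
    qed (use c_pos that d in \<open>auto intro: less_imp_le\<close>)
    finally show ?thesis .
  qed
  ultimately show ?thesis
    unfolding lower_tail_exponent_def by blast
qed

end

section \<open>Phase quantisation and power allocation\<close>

lemma abs_qerr_le:
  assumes "2 \<le> b"
  shows "\<bar>qerr b \<theta>\<bar> \<le> pi / 4"
proof -
  define D where "D = qstep b"
  have "(4::real) \<le> 2 ^ b" using power_increasing[OF assms, of "2::real"] by simp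
  then have D: "0 < D" "D \<le> pi / 2"
    using pi_gt_zero by (auto simp: D_def qstep_def field_simps)
  define f where "f = real_of_int \<lfloor>\<theta> / D\<rfloor>"
  have "f \<le> \<theta> / D" "\<theta> / D < f + 1" unfolding f_def by linarith+
  then have "D * f \<le> \<theta>" "\<theta> < D * (f + 1)" using D by (auto simp: field_simps)
  then have "\<bar>D * (f + 1/2) - \<theta>\<bar> \<le> D / 2" unfolding abs_le_iff distrib_left by linarith
  then show ?thesis using D unfolding qerr_def D_def[symmetric] f_def[symmetric] by linarith
qed

lemma cos_qerr_ge:
  assumes "2 \<le> b"
  shows "1/2 \<le> cos (qerr b \<theta>)"
proof -
  have "cos (pi/3) \<le> cos \<bar>qerr b \<theta>\<bar>"
    by (rule cos_monotone_0_pi_le) (use abs_qerr_le[OF assms, of \<theta>] pi_gt_zero in auto)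
  then show ?thesis by (simp add: cos_60)
qed

lemma Zq_le_Zcont:
  assumes "0 \<le> \<beta>"
  shows "Zq b \<beta> K h G g \<le> Zcont \<beta> K h G g"
proof -
  let ?t = "\<lambda>k. complex_of_real (cmod (G k) * cmod (g k)) * cis (qerr b (Arg h - Arg (G k * g k)))"
  have "Zq b \<beta> K h G g \<le> cmod (complex_of_real (cmod h)) + cmod (complex_of_real \<beta> * (\<Sum>k=1..K. ?t k))"
    unfolding Zq_def by (rule norm_triangle_ineq)
  also have "cmod (complex_of_real \<beta> * (\<Sum>k=1..K. ?t k)) = \<beta> * cmod (\<Sum>k=1..K. ?t k)"
    by (simp only: norm_mult norm_of_real abs_of_nonneg[OF assms])
  also have "\<dots> \<le> \<beta> * (\<Sum>k=1..K. cmod (?t k))"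
    by (rule mult_left_mono[OF norm_sum assms])
  also have "(\<Sum>k=1..K. cmod (?t k)) = (\<Sum>k=1..K. cmod (G k) * cmod (g k))"
    by (simp add: norm_mult)
  finally show ?thesis by (simp add: Zcont_def)
qed

(* Bounded through the real part, to which each cascaded term contributes at least half of its
   modulus. *)
lemma Zq_ge:
  assumes b: "2 \<le> b" and \<beta>: "0 \<le> \<beta>"
  shows "cmod h \<le> Zq b \<beta> K h G g"
    and "k \<in> {1..K} \<Longrightarrow> \<beta> * (cmod (G k) * cmod (g k)) / 2 \<le> Zq b \<beta> K h G g"
proof -
  define c where "c k = cmod (G k) * cmod (g k) * cos (qerr b (Arg h - Arg (G k * g k)))" for k
  have half: "cmod (G k) * cmod (g k) / 2 \<le> c k" for k
    using mult_left_mono[OF cos_qerr_ge[OF b], of "cmod (G k) * cmod (g k)"] by (simp add: c_def)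
  then have c_nonneg: "0 \<le> c k" for k by (rule order.trans[rotated]) simp
  have "Re (complex_of_real (cmod h) + complex_of_real \<beta> *
       (\<Sum>k=1..K. complex_of_real (cmod (G k) * cmod (g k)) * cis (qerr b (Arg h - Arg (G k * g k)))))
      = cmod h + \<beta> * (\<Sum>k=1..K. c k)"
    by (simp add: c_def sum_distrib_left)
  then have Re: "cmod h + \<beta> * (\<Sum>k=1..K. c k) \<le> Zq b \<beta> K h G g"
    unfolding Zq_def by (metis complex_Re_le_cmod)
  have cascade_nonneg: "0 \<le> \<beta> * (\<Sum>k=1..K. c k)" using \<beta> c_nonneg by (simp add: sum_nonneg)
  then show "cmod h \<le> Zq b \<beta> K h G g" using Re by linarith
  assume k: "k \<in> {1..K}"
  have "c k \<le> (\<Sum>k=1..K. c k)" by (rule member_le_sum) (use k c_nonneg in auto)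
  then have "\<beta> * (cmod (G k) * cmod (g k) / 2) \<le> \<beta> * (\<Sum>k=1..K. c k)"
    using half[of k] \<beta> by (intro mult_left_mono) auto
  then show "\<beta> * (cmod (G k) * cmod (g k)) / 2 \<le> Zq b \<beta> K h G g"
    using Re norm_ge_zero[of h] by linarith
qed

lemma Zcont_less:
  assumes \<beta>: "0 \<le> \<beta>" "\<beta> \<le> 1" and h: "cmod h < s"
    and Gg: "\<And>k. k \<in> {1..K} \<Longrightarrow> cmod (G k) * cmod (g k) < s"
  shows "Zcont \<beta> K h G g < (1 + real K) * s"
proof -
  have "(\<Sum>k=1..K. cmod (G k) * cmod (g k)) \<le> (\<Sum>k=1..K. s)"
    by (rule sum_mono) (use Gg in \<open>auto intro: less_imp_le\<close>)
  moreover have "\<beta> * (\<Sum>k=1..K. cmod (G k) * cmod (g k)) \<le> (\<Sum>k=1..K. cmod (G k) * cmod (g k))"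
    using \<beta> by (intro mult_left_le_one_le sum_nonneg) auto
  ultimately show ?thesis using h unfolding Zcont_def by (simp add: algebra_simps)
qed

(* Arg is defined through Ln, whose measurability (Ln_measurable) comes from
   Cauchy_Integral_Theorem. *)
lemma borel_measurable_Arg [measurable]: "Arg \<in> borel_measurable borel"
  unfolding Arg_def by measurable

lemma borel_measurable_cis [measurable]: "cis \<in> borel_measurable borel"
proof -
  have "cis = (\<lambda>x. exp (\<i> * complex_of_real x))" by (auto simp: cis_conv_exp fun_eq_iff)
  moreover have "(\<lambda>x. exp (\<i> * complex_of_real x)) \<in> borel_measurable borel"
    by (intro borel_measurable_continuous_onI continuous_intros)
  ultimately show ?thesis by simp
qed

lemma rho_max_eq_divide:
  assumes "0 < \<rho>" "1 \<le> n"
  shows "rho_max \<alpha> R N \<rho> n = rho_max \<alpha> R N 1 n / \<rho>"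
proof -
  have "rho_tilde \<alpha> R N \<rho> n l = rho_tilde \<alpha> R N 1 n l / \<rho>" for l
    by (simp add: rho_tilde_def divide_divide_eq_left mult.commute)
  then have "rho_max \<alpha> R N \<rho> n = Max ((\<lambda>x. x / \<rho>) ` rho_tilde \<alpha> R N 1 n ` {1..n})"
    unfolding rho_max_def image_image by simp
  also have "\<dots> = Max (rho_tilde \<alpha> R N 1 n ` {1..n}) / \<rho>"
    by (rule mono_Max_commute[symmetric]) (use assms in \<open>auto simp: mono_def divide_right_mono\<close>)
  finally show ?thesis by (simp add: rho_max_def)
qed

lemma rho_max_pos:
  assumes n: "n \<in> {1..N}" and R: "\<And>l. l \<in> {1..N} \<Longrightarrow> 0 < R l"
    and \<alpha>: "\<And>i. i \<in> {1..N} \<Longrightarrow> 0 < \<alpha> i"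
    and feasible: "\<And>l. 1 \<le> l \<Longrightarrow> l \<le> N - 1 \<Longrightarrow> \<alpha> l - gam R l * (\<Sum>i=l+1..N. \<alpha> i) > 0"
  shows "0 < rho_max \<alpha> R N 1 n"
proof -
  have gam: "0 < gam R l" if "l \<in> {1..N}" for l
    using R[OF that] powr_less_mono[of 0 "R l" 2] by (simp add: gam_def)
  have "0 < rho_tilde \<alpha> R N 1 n 1"
  proof (cases "(1, n) = (N, N)")
    case True
    then show ?thesis using gam[of N] \<alpha>[of N] n by (simp add: rho_tilde_def)
  next
    case False
    then have "1 \<le> N - 1" using n by auto
    then show ?thesis using False gam[of 1] feasible[of 1] n by (simp add: rho_tilde_def)
  qed
  also have "rho_tilde \<alpha> R N 1 n 1 \<le> rho_max \<alpha> R N 1 n"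
    unfolding rho_max_def by (rule Max_ge) (use n in auto)
  finally show ?thesis .
qed

section \<open>The channel model\<close>

locale nakagami_channels = prob_space M for M :: "'a measure" +
  fixes N K :: nat and h :: "nat \<Rightarrow> 'a \<Rightarrow> complex" and G g :: "nat \<Rightarrow> nat \<Rightarrow> 'a \<Rightarrow> complex"
    and mh mG mg :: real
  assumes m_pos: "0 < mh" "0 < mG" "0 < mg" and mG_neq_mg: "mG \<noteq> mg"
    and indep: "indep_vars (\<lambda>_. borel) (chan h G g) (chan_idx N K)"
    and dist_h: "\<And>i. i \<in> {1..N} \<Longrightarrow>
        distributed M lborel (\<lambda>\<omega>. cmod (h i \<omega>)) (\<lambda>x. ennreal (nakagami_density mh x))"
    and dist_G: "\<And>i k. i \<in> {1..N} \<Longrightarrow> k \<in> {1..K} \<Longrightarrow>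
        distributed M lborel (\<lambda>\<omega>. cmod (G i k \<omega>)) (\<lambda>x. ennreal (nakagami_density mG x))"
    and dist_g: "\<And>i k. i \<in> {1..N} \<Longrightarrow> k \<in> {1..K} \<Longrightarrow>
        distributed M lborel (\<lambda>\<omega>. cmod (g i k \<omega>)) (\<lambda>x. ennreal (nakagami_density mg x))"
begin

lemma chan_idxI:
  assumes "i \<in> {1..N}"
  shows "CH i \<in> chan_idx N K"
    and "k \<in> {1..K} \<Longrightarrow> CG i k \<in> chan_idx N K"
    and "k \<in> {1..K} \<Longrightarrow> Cg i k \<in> chan_idx N K"
  using assms by (auto simp: chan_idx_def image_iff)

lemma measurable_chan:
  assumes "i \<in> {1..N}"
  shows "h i \<in> borel_measurable M"
    and "k \<in> {1..K} \<Longrightarrow> G i k \<in> borel_measurable M"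
    and "k \<in> {1..K} \<Longrightarrow> g i k \<in> borel_measurable M"
proof -
  have chan: "chan h G g a \<in> borel_measurable M" if "a \<in> chan_idx N K" for a
    using indep that unfolding indep_vars_def by auto
  show "h i \<in> borel_measurable M" using chan[OF chan_idxI(1)[OF assms]] by (simp add: chan_def)
  show "G i k \<in> borel_measurable M" if "k \<in> {1..K}"
    using chan[OF chan_idxI(2)[OF assms that]] by (simp add: chan_def)
  show "g i k \<in> borel_measurable M" if "k \<in> {1..K}"
    using chan[OF chan_idxI(3)[OF assms that]] by (simp add: chan_def)
qed

lemma borel_measurable_Zq:
  assumes "i \<in> {1..N}"
  shows "(\<lambda>\<omega>. Zq b \<beta> K (h i \<omega>) (\<lambda>k. G i k \<omega>) (\<lambda>k. g i k \<omega>)) \<in> borel_measurable M"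
proof -
  note [measurable] = measurable_chan(1)[OF assms]
  have [measurable]: "(\<lambda>\<omega>. \<Sum>k=1..K. complex_of_real (cmod (G i k \<omega>) * cmod (g i k \<omega>)) *
      cis (qerr b (Arg (h i \<omega>) - Arg (G i k \<omega> * g i k \<omega>)))) \<in> borel_measurable M"
  proof (rule borel_measurable_sum)
    fix k assume k: "k \<in> {1..K}"
    note [measurable] = measurable_chan(2,3)[OF assms k]
    show "(\<lambda>\<omega>. complex_of_real (cmod (G i k \<omega>) * cmod (g i k \<omega>)) *
        cis (qerr b (Arg (h i \<omega>) - Arg (G i k \<omega> * g i k \<omega>)))) \<in> borel_measurable M"
      unfolding qerr_def qstep_def by measurable
  qed
  show ?thesis unfolding Zq_def by measurable
qed

lemma borel_measurable_Zcont:
  assumes "i \<in> {1..N}"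
  shows "(\<lambda>\<omega>. Zcont \<beta> K (h i \<omega>) (\<lambda>k. G i k \<omega>) (\<lambda>k. g i k \<omega>)) \<in> borel_measurable M"
  unfolding Zcont_def using measurable_chan[OF assms] by measurable

lemma indep_var_cmod_chan:
  assumes "a \<in> chan_idx N K" "b \<in> chan_idx N K" "a \<noteq> b"
  shows "indep_var borel (\<lambda>\<omega>. cmod (chan h G g a \<omega>)) borel (\<lambda>\<omega>. cmod (chan h G g b \<omega>))"
proof -
  have "indep_var borel ((\<lambda>z. cmod z) \<circ> chan h G g a) borel ((\<lambda>z. cmod z) \<circ> chan h G g b)"
    by (rule indep_var_compose[OF indep_var_of_indep_vars[OF indep assms]]) measurable
  then show ?thesis by (simp add: comp_def)
qed

definition link_gain :: "nat \<times> nat \<Rightarrow> 'a \<Rightarrow> real" where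
  "link_gain j \<omega> = (if snd j = 0 then cmod (h (fst j) \<omega>)
                    else cmod (G (fst j) (snd j) \<omega>) * cmod (g (fst j) (snd j) \<omega>))"

definition link_exponent :: "nat \<Rightarrow> real" where
  "link_exponent k = (if k = 0 then 2 * mh else 2 * min mG mg)"

(* Each link gain is a function of the coefficients indexed by links j, and these index sets are
   pairwise disjoint. *)
lemma indep_link_gain: "indep_vars (\<lambda>_. borel) link_gain ({1..N} \<times> {0..K})"
proof -
  define links where
    "links j = (if snd j = 0 then {CH (fst j)} else {CG (fst j) (snd j), Cg (fst j) (snd j)})" for j
  define gain where "gain j f = (if snd j = 0 then cmod (f (CH (fst j)))
      else cmod (f (CG (fst j) (snd j))) * cmod (f (Cg (fst j) (snd j))))"
    for j and f :: "cidx \<Rightarrow> complex"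
  have "indep_vars (\<lambda>j. PiM (links j) (\<lambda>_. borel))
      (\<lambda>j \<omega>. restrict (\<lambda>a. chan h G g a \<omega>) (links j)) ({1..N} \<times> {0..K})"
  proof (rule indep_vars_restrict[OF indep])
    show "disjoint_family_on links ({1..N} \<times> {0..K})"
      by (auto simp: disjoint_family_on_def links_def split: if_splits)
    show "links j \<subseteq> chan_idx N K" if "j \<in> {1..N} \<times> {0..K}" for j
      using that by (auto simp: links_def chan_idx_def)
  qed
  then have "indep_vars (\<lambda>_. borel)
      (\<lambda>j \<omega>. gain j (restrict (\<lambda>a. chan h G g a \<omega>) (links j))) ({1..N} \<times> {0..K})"
  proof (rule indep_vars_compose2)
    fix j :: "nat \<times> nat"
    have component: "(\<lambda>f. f a) \<in> PiM (links j) (\<lambda>_. borel) \<rightarrow>\<^sub>M (borel :: complex measure)"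
      if "a \<in> links j" for a
      using that by (rule measurable_component_singleton)
    show "gain j \<in> PiM (links j) (\<lambda>_. borel) \<rightarrow>\<^sub>M borel"
      unfolding gain_def using component by (auto simp: links_def)
  qed
  then show ?thesis
    by (rule iffD1[OF indep_vars_cong, rotated 3])
      (auto simp: gain_def link_gain_def links_def chan_def fun_eq_iff)
qed

lemma lower_tail_exponent_link_gain:
  assumes "j \<in> {1..N} \<times> {0..K}"
  shows "lower_tail_exponent M (link_gain j) (link_exponent (snd j))"
proof -
  obtain i k where j: "j = (i, k)" and i: "i \<in> {1..N}" and k: "k \<in> {0..K}" using assms by auto
  show ?thesis
  proof (cases "k = 0")
    case True
    then have "link_gain j = (\<lambda>\<omega>. cmod (h i \<omega>))" using j by (simp add: link_gain_def fun_eq_iff)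
    then show ?thesis
      using lower_tail_exponent_nakagami[OF m_pos(1) dist_h[OF i]] j True
      by (simp add: link_exponent_def)
  next
    case False
    then have k: "k \<in> {1..K}" using k by auto
    have G: "lower_tail_exponent M (\<lambda>\<omega>. cmod (G i k \<omega>)) (2 * mG)"
      by (rule lower_tail_exponent_nakagami[OF m_pos(2) dist_G[OF i k]])
    have g: "lower_tail_exponent M (\<lambda>\<omega>. cmod (g i k \<omega>)) (2 * mg)"
      by (rule lower_tail_exponent_nakagami[OF m_pos(3) dist_g[OF i k]])
    have Gg: "indep_var borel (\<lambda>\<omega>. cmod (G i k \<omega>)) borel (\<lambda>\<omega>. cmod (g i k \<omega>))"
      using indep_var_cmod_chan[OF chan_idxI(2,3)[OF i k]] by (simp add: chan_def)
    have gG: "indep_var borel (\<lambda>\<omega>. cmod (g i k \<omega>)) borel (\<lambda>\<omega>. cmod (G i k \<omega>))"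
      using indep_var_cmod_chan[OF chan_idxI(3,2)[OF i k]] by (simp add: chan_def)
    have "lower_tail_exponent M (\<lambda>\<omega>. cmod (G i k \<omega>) * cmod (g i k \<omega>)) (2 * min mG mg)"
    proof (cases "mG < mg")
      case True
      then show ?thesis
        using lower_tail_exponent_mult[OF Gg _ G g] m_pos by simp
    next
      case False
      then have "mg < mG" using mG_neq_mg by simp
      then show ?thesis
        using lower_tail_exponent_mult[OF gG _ g G] m_pos by (simp add: mult.commute)
    qed
    moreover have "link_gain j = (\<lambda>\<omega>. cmod (G i k \<omega>) * cmod (g i k \<omega>))"
      using False j by (simp add: link_gain_def fun_eq_iff)
    ultimately show ?thesis using False j by (simp add: link_exponent_def)
  qed
qed

lemma sum_link_exponent: "(\<Sum>k=0..K. link_exponent k) = 2 * (mh + min mG mg * real K)"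
  by (simp add: link_exponent_def sum.atLeast_Suc_atMost[of 0 K] algebra_simps)

lemma link_gain_less_of_Zq_less:
  assumes "2 \<le> b" "0 < \<beta>" "k \<in> {0..K}" "Zq b \<beta> K (h i \<omega>) (\<lambda>k. G i k \<omega>) (\<lambda>k. g i k \<omega>) < s"
  shows "link_gain (i, k) \<omega> < (if k = 0 then 1 else 2 / \<beta>) * s"
proof (cases "k = 0")
  case True
  then show ?thesis
    using Zq_ge(1)[of b \<beta> "h i \<omega>" K "\<lambda>k. G i k \<omega>" "\<lambda>k. g i k \<omega>"] assms by (simp add: link_gain_def)
next
  case False
  then have "\<beta> * (cmod (G i k \<omega>) * cmod (g i k \<omega>)) / 2 < s"
    using Zq_ge(2)[of b \<beta> k K "\<lambda>k. G i k \<omega>" "\<lambda>k. g i k \<omega>" "h i \<omega>"] assms by simp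
  then show ?thesis using False \<open>0 < \<beta>\<close> by (simp add: link_gain_def field_simps)
qed

lemma Zcont_less_of_link_gain_less:
  assumes "0 \<le> \<beta>" "\<beta> \<le> 1" "\<forall>k\<in>{0..K}. link_gain (i, k) \<omega> < s"
  shows "Zcont \<beta> K (h i \<omega>) (\<lambda>k. G i k \<omega>) (\<lambda>k. g i k \<omega>) < (1 + real K) * s"
proof (rule Zcont_less[OF assms(1,2)])
  show "cmod (h i \<omega>) < s" using bspec[OF assms(3), of 0] by (simp add: link_gain_def)
  show "cmod (G i k \<omega>) * cmod (g i k \<omega>) < s" if "k \<in> {1..K}" for k
    using bspec[OF assms(3), of k] that by (simp add: link_gain_def)
qed

lemma diversity_order_order_stat:
  fixes Z :: "nat \<Rightarrow> 'a \<Rightarrow> real"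
  assumes b: "2 \<le> b" and \<beta>: "0 < \<beta>" "\<beta> \<le> 1" and n: "n \<in> {1..N}"
    and Z_meas: "\<And>i. i \<in> {1..N} \<Longrightarrow> Z i \<in> borel_measurable M"
    and Zq_le: "\<And>i \<omega>. Zq b \<beta> K (h i \<omega>) (\<lambda>k. G i k \<omega>) (\<lambda>k. g i k \<omega>) \<le> Z i \<omega>"
    and le_Zcont: "\<And>i \<omega>. Z i \<omega> \<le> Zcont \<beta> K (h i \<omega>) (\<lambda>k. G i k \<omega>) (\<lambda>k. g i k \<omega>)"
    and T: "0 < T"
  shows "((\<lambda>\<rho>. - ln (prob {\<omega>\<in>space M. (order_stat N (\<lambda>i. Z i \<omega>) n)\<^sup>2 < T / \<rho>}) / ln \<rho>)
            \<longlongrightarrow> real n * (mh + min mG mg * real K)) at_top"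
proof -
  have tail: "lower_tail_exponent M (\<lambda>\<omega>. order_stat N (\<lambda>i. Z i \<omega>) n)
      (real n * (\<Sum>k=0..K. link_exponent k))"
  proof (rule lower_tail_exponent_order_stat[OF indep_link_gain lower_tail_exponent_link_gain
        Z_meas])
    show "link_gain (i, k) \<omega> < (if k = 0 then 1 else 2 / \<beta>) * s"
      if "k \<in> {0..K}" "Z i \<omega> < s" for i k \<omega> s
      using link_gain_less_of_Zq_less[OF b \<beta>(1) that(1)] Zq_le[of i \<omega>] that(2) by simp
    show "Z i \<omega> < (1 + real K) * s" if "\<forall>k\<in>{0..K}. link_gain (i, k) \<omega> < s" for i \<omega> s
      using Zcont_less_of_link_gain_less[OF _ \<beta>(2) that] le_Zcont[of i \<omega>] \<beta> by simp
  qed (use \<beta> n in auto)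
  have nonneg: "0 \<le> order_stat N (\<lambda>i. Z i \<omega>) n" for \<omega>
    using order_stat_nonneg[OF n] order.trans[OF _ Zq_le] by (simp add: Zq_def)
  have "real n * (\<Sum>k=0..K. link_exponent k) / 2 = real n * (mh + min mG mg * real K)"
    by (simp add: sum_link_exponent)
  with lower_tail_exponent_ln_limit[OF tail nonneg T] show ?thesis by simp
qed

end

theorem corollary3:
  fixes M :: "'a measure" and N K b n :: nat and \<beta> mG mg mh :: real
    and h :: "nat \<Rightarrow> 'a \<Rightarrow> complex" and G g :: "nat \<Rightarrow> nat \<Rightarrow> 'a \<Rightarrow> complex"
    and \<alpha> R :: "nat \<Rightarrow> real"
  assumes "prob_space M"
    and "N \<ge> 1" and "K \<ge> 1" and "b \<ge> 2" and "0 < \<beta>" and "\<beta> \<le> 1"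
    and "mG \<ge> 1/2" and "mg \<ge> 1/2" and "mh \<ge> 1/2" and "mG \<noteq> mg"
    and indep: "prob_space.indep_vars M (\<lambda>_. borel) (chan h G g) (chan_idx N K)"
    and dist_h: "\<And>i. i \<in> {1..N} \<Longrightarrow>
        distributed M lborel (\<lambda>\<omega>. cmod (h i \<omega>)) (\<lambda>x. ennreal (nakagami_density mh x))"
    and dist_G: "\<And>i k. i \<in> {1..N} \<Longrightarrow> k \<in> {1..K} \<Longrightarrow>
        distributed M lborel (\<lambda>\<omega>. cmod (G i k \<omega>)) (\<lambda>x. ennreal (nakagami_density mG x))"
    and dist_g: "\<And>i k. i \<in> {1..N} \<Longrightarrow> k \<in> {1..K} \<Longrightarrow>
        distributed M lborel (\<lambda>\<omega>. cmod (g i k \<omega>)) (\<lambda>x. ennreal (nakagami_density mg x))"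
    and alpha_dec: "\<And>i j. 1 \<le> i \<Longrightarrow> i < j \<Longrightarrow> j \<le> N \<Longrightarrow> \<alpha> j < \<alpha> i"
    and alpha_pos: "\<And>i. i \<in> {1..N} \<Longrightarrow> 0 < \<alpha> i"
    and alpha_sum: "(\<Sum>i=1..N. \<alpha> i) = 1"
    and R_pos: "\<And>l. l \<in> {1..N} \<Longrightarrow> 0 < R l"
    and feasible: "\<And>l. 1 \<le> l \<Longrightarrow> l \<le> N - 1 \<Longrightarrow> \<alpha> l - gam R l * (\<Sum>i=l+1..N. \<alpha> i) > 0"
    and "n \<in> {1..N}"
  shows "((\<lambda>\<rho>. - ln (outage_b M b \<beta> K N h G g \<alpha> R n \<rho>) / ln \<rho>)
            \<longlongrightarrow> real n * (mh + min mG mg * real K)) at_top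
       \<and> ((\<lambda>\<rho>. - ln (outage_c M \<beta> K N h G g \<alpha> R n \<rho>) / ln \<rho>)
            \<longlongrightarrow> real n * (mh + min mG mg * real K)) at_top"
proof -
  interpret nakagami_channels M N K h G g mh mG mg
    using assms(1,7-14) by (intro nakagami_channels.intro nakagami_channels_axioms.intro) auto
  have n: "n \<in> {1..N}" and b: "2 \<le> b" and \<beta>: "0 < \<beta>" "\<beta> \<le> 1" using assms by auto
  define T where "T = rho_max \<alpha> R N 1 n"
  have T: "0 < T" unfolding T_def by (rule rho_max_pos[OF n R_pos alpha_pos feasible])
  have threshold: "\<forall>\<^sub>F \<rho> in at_top. rho_max \<alpha> R N \<rho> n = T / \<rho>"
    using eventually_gt_at_top[of 0]
  proof eventually_elim
    case (elim \<rho>)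
    then show ?case using rho_max_eq_divide[OF elim, of n \<alpha> R N] n by (simp add: T_def)
  qed
  let ?Zq = "\<lambda>i \<omega>. Zq b \<beta> K (h i \<omega>) (\<lambda>k. G i k \<omega>) (\<lambda>k. g i k \<omega>)"
    and ?Zc = "\<lambda>i \<omega>. Zcont \<beta> K (h i \<omega>) (\<lambda>k. G i k \<omega>) (\<lambda>k. g i k \<omega>)"
    and ?D = "real n * (mh + min mG mg * real K)"
  have Zq_le_Zc: "?Zq i \<omega> \<le> ?Zc i \<omega>" for i \<omega>
    using \<beta> by (simp add: Zq_le_Zcont)
  have "\<forall>\<^sub>F \<rho> in at_top. - ln (prob {\<omega>\<in>space M. (order_stat N (\<lambda>i. ?Zq i \<omega>) n)\<^sup>2 < T / \<rho>}) / ln \<rho>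
      = - ln (outage_b M b \<beta> K N h G g \<alpha> R n \<rho>) / ln \<rho>"
    using threshold by eventually_elim (simp add: outage_b_def)
  with diversity_order_order_stat[OF b \<beta> n borel_measurable_Zq order_refl Zq_le_Zc T]
  have "((\<lambda>\<rho>. - ln (outage_b M b \<beta> K N h G g \<alpha> R n \<rho>) / ln \<rho>) \<longlongrightarrow> ?D) at_top"
    by (rule Lim_transform_eventually)
  moreover have "\<forall>\<^sub>F \<rho> in at_top.
      - ln (prob {\<omega>\<in>space M. (order_stat N (\<lambda>i. ?Zc i \<omega>) n)\<^sup>2 < T / \<rho>}) / ln \<rho>
      = - ln (outage_c M \<beta> K N h G g \<alpha> R n \<rho>) / ln \<rho>"
    using threshold by eventually_elim (simp add: outage_c_def)
  with diversity_order_order_stat[OF b \<beta> n borel_measurable_Zcont Zq_le_Zc order_refl T]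
  have "((\<lambda>\<rho>. - ln (outage_c M \<beta> K N h G g \<alpha> R n \<rho>) / ln \<rho>) \<longlongrightarrow> ?D) at_top"
    by (rule Lim_transform_eventually)
  ultimately show ?thesis ..
qed
end
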